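(* In the setting below, suppose $0<\eta\le\frac{1}{L(K+1)}$, let $a\ge 2$ be an integer and set $\epsilon_i=2\eta L(\eta KL)^{i-1}$ for $i\ge1$. Then for every integer $k\ge aK+1$, \[ \Big(1+\eta\frac{\mu}{8}\Big)F_{k+1}\le\Big(1-\sum_{i=1}^{a-1}\epsilon_i\Big)F_k+\sum_{i=1}^{a-1}\epsilon_i F_{k-iK}+\eta^2\frac{KL}{2}\epsilon_{a-1}\sum_{j=k-aK}^{k-1}\|d_j\|^2 . \]
   Context: Let $m,n\ge 1$ be integers and $\|\cdot\|$ the Euclidean norm on $\mathbb{R}^n$. For $i=1,\dots,m$, let $f_i:\mathbb{R}^n\to\mathbb{R}$ be continuously differentiable with $\|\nabla f_i(x)-\nabla f_i(y)\|\le L_i\|x-y\|$ for all $x,y$, where $L_i\ge 0$ (the $f_i$ are not assumed convex). Let $f=\frac1m\sum_{i=1}^m f_i$ and $L=\frac1m\sum_{i=1}^m L_i$. Assume $f$ is $\mu$-strongly convex for some $\mu>0$ (i.e. $x\mapsto f(x)-\frac{\mu}{2}\|x\|^2$ is convex). Let $r:\mathbb{R}^n\to(-\infty,\infty]$ be proper, closed and convex, let $F=f+r$, and let $x^*$ be the unique minimizer of $F$. For $\eta>0$ define $\mathrm{prox}_r^\eta(y)=\arg\min_{x\in\mathbb{R}^n}\{\frac12\|x-y\|^2+\eta r(x)\}$. PIAG method: fix an integer $K\ge 0$, a step size $\eta>0$ and $x_0\in\mathbb{R}^n$; for each $k\ge0$ and each $i$ let $\tau_{i,k}$ be any (deterministically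 chosen) integer with $\max(k-K,0)\le\tau_{i,k}\le k$; set $g_k=\frac1m\sum_{i=1}^m\nabla f_i(x_{\tau_{i,k}})$ and $x_{k+1}=\mathrm{prox}_r^\eta(x_k-\eta g_k)$. Define $d_k=(x_{k+1}-x_k)/\eta$ and $F_k=F(x_k)-F(x^* )$. *)

theory Defs
  imports "HOL-Analysis.Analysis" "HOL-Library.Extended_Real"
begin

definition epi :: "('a \<Rightarrow> ereal) \<Rightarrow> ('a \<times> real) set" where
  "epi r = {(x, t). r x \<le> ereal t}"

definition proper_closed_convex :: "('a::real_normed_vector \<Rightarrow> ereal) \<Rightarrow> bool" where
  "proper_closed_convex r \<longleftrightarrow>
     (\<forall>x. r x \<noteq> -\<infinity>) \<and> (\<exists>x. r x \<noteq> \<infinity>) \<and> convex (epi r) \<and> closed (epi r)"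

definition is_prox :: "('a::real_normed_vector \<Rightarrow> ereal) \<Rightarrow> real \<Rightarrow> 'a \<Rightarrow> 'a \<Rightarrow> bool" where
  "is_prox r \<eta> y z \<longleftrightarrow>
     (\<forall>w. ereal ((norm (z - y))\<^sup>2 / 2) + ereal \<eta> * r z \<le> ereal ((norm (w - y))\<^sup>2 / 2) + ereal \<eta> * r w)"

end

theory Submission
  imports Defs
begin

text \<open>Writing \<open>e\<^sub>j = \<nabla>f(x\<^sub>j) - g\<^sub>j\<close> for the error of the delayed gradient, the optimality
  condition of the prox step tested at \<open>x\<^sub>j\<close> (together with the descent lemma) and at \<open>x\<^sup>*\<close>
  (together with strong convexity) gives two upper bounds for \<open>F\<^sub>j\<^sub>+\<^sub>1\<close>; a suitable
  combination of them yields \<open>(1 + \<eta>\<mu>/8) F\<^sub>j\<^sub>+\<^sub>1 \<le> F\<^sub>j + \<eta>\<parallel>e\<^sub>j\<parallel>\<^sup>2\<close>.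
  Since the delays are at most \<open>K\<close>, \<open>\<parallel>e\<^sub>j\<parallel> \<le> \<eta>L\<Sum>\<parallel>d\<^sub>l\<parallel>\<close> over the last \<open>K\<close> steps, so the
  error term is \<open>\<eta>\<^sup>2L\<close> times a window of squared steps. The sufficient-decrease inequality
  bounds such a window by an objective decrease plus the window shifted \<open>K\<close> steps back, scaled
  by \<open>\<eta>KL\<close>; shifting \<open>a - 1\<close> times produces the weights \<open>\<epsilon>\<^sub>i\<close>.\<close>

lemma norm_add_scaleR_power2:
  fixes a b :: "'a::real_inner"
  shows "(norm (a + t *\<^sub>R b))\<^sup>2 = (norm a)\<^sup>2 + 2 * t * (a \<bullet> b) + t\<^sup>2 * (norm b)\<^sup>2"
  unfolding power2_norm_eq_inner
  by (simp add: inner_add_left inner_add_right inner_commute algebra_simps power2_eq_square)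

lemma inner_le_young:
  fixes a b :: "'a::real_inner"
  assumes "c > 0"
  shows "2 * (a \<bullet> b) \<le> c * (norm a)\<^sup>2 + (norm b)\<^sup>2 / c"
proof -
  have "0 \<le> (norm (c *\<^sub>R a + (-1) *\<^sub>R b))\<^sup>2" by simp
  also have "\<dots> = c\<^sup>2 * (norm a)\<^sup>2 - 2 * c * (a \<bullet> b) + (norm b)\<^sup>2"
    unfolding norm_add_scaleR_power2 by (simp add: power_mult_distrib)
  also have "\<dots> = c * (c * (norm a)\<^sup>2 + (norm b)\<^sup>2 / c) - c * (2 * (a \<bullet> b))"
    using assms by (simp add: algebra_simps power2_eq_square)
  finally show ?thesis using assms by simp
qed

lemma norm_diff_power2_le:
  fixes a b :: "'a::real_inner"
  shows "(norm (a - b))\<^sup>2 \<le> 2 * (norm a)\<^sup>2 + 2 * (norm b)\<^sup>2"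
proof -
  have "(norm (a + (-1) *\<^sub>R b))\<^sup>2 = (norm a)\<^sup>2 - 2 * (a \<bullet> b) + (norm b)\<^sup>2"
    unfolding norm_add_scaleR_power2 by simp
  with inner_le_young[of 1 a "-b"] show ?thesis by simp
qed

lemma inner_minus_power2_le:
  fixes v u :: "'a::real_inner"
  shows "c * (v \<bullet> u) - c\<^sup>2 / 2 * (norm u)\<^sup>2 \<le> (norm v)\<^sup>2 / 2"
  using inner_le_young[of 1 v "c *\<^sub>R u"] by (simp add: power_mult_distrib)

lemma norm_diff_le_sum_increments:
  fixes x :: "nat \<Rightarrow> 'a::real_normed_vector"
  assumes "t \<le> j"
  shows "norm (x j - x t) \<le> (\<Sum>l\<in>{t..<j}. norm (x (Suc l) - x l))"
proof -
  have "x j - x t = (\<Sum>l\<in>{t..<j}. x (Suc l) - x l)"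
    using sum_Suc_diff'[OF assms, of x] by simp
  then show ?thesis by (simp add: norm_sum)
qed

lemma norm_average_diff_le:
  fixes v w :: "nat \<Rightarrow> 'a::real_normed_vector"
  assumes "\<And>i. i \<in> I \<Longrightarrow> norm (v i - w i) \<le> c i * \<delta>"
  shows "norm ((1 / real m) *\<^sub>R (\<Sum>i\<in>I. v i) - (1 / real m) *\<^sub>R (\<Sum>i\<in>I. w i))
           \<le> (1 / real m) * (\<Sum>i\<in>I. c i) * \<delta>"
proof -
  have "norm (\<Sum>i\<in>I. v i - w i) \<le> (\<Sum>i\<in>I. c i) * \<delta>"
    using order_trans[OF norm_sum sum_mono[OF assms]] by (simp add: sum_distrib_right)
  then show ?thesis by (simp add: divide_right_mono sum_subtractf flip: scaleR_diff_right)
qed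

lemma norm_delayed_average_diff_le:
  fixes grad :: "nat \<Rightarrow> 'a::real_normed_vector \<Rightarrow> 'b::real_normed_vector"
  assumes lip: "\<And>i y z. i \<in> I \<Longrightarrow> norm (grad i y - grad i z) \<le> Li i * norm (y - z)"
    and Li: "\<And>i. i \<in> I \<Longrightarrow> Li i \<ge> 0"
    and delay: "\<And>i. i \<in> I \<Longrightarrow> j - K \<le> \<tau> i \<and> \<tau> i \<le> j"
  shows "norm ((1 / real m) *\<^sub>R (\<Sum>i\<in>I. grad i (x j)) - (1 / real m) *\<^sub>R (\<Sum>i\<in>I. grad i (x (\<tau> i))))
           \<le> (1 / real m) * (\<Sum>i\<in>I. Li i) * (\<Sum>l\<in>{j-K..<j}. norm (x (Suc l) - x l))"
proof (rule norm_average_diff_le)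
  fix i assume i: "i \<in> I"
  have "norm (x j - x (\<tau> i)) \<le> (\<Sum>l\<in>{\<tau> i..<j}. norm (x (Suc l) - x l))"
    using delay[OF i] by (intro norm_diff_le_sum_increments) auto
  also have "\<dots> \<le> (\<Sum>l\<in>{j-K..<j}. norm (x (Suc l) - x l))"
    using delay[OF i] by (intro sum_mono2) auto
  finally show "norm (grad i (x j) - grad i (x (\<tau> i))) \<le> Li i * (\<Sum>l\<in>{j-K..<j}. norm (x (Suc l) - x l))"
    using lip[OF i] Li[OF i] by (meson mult_left_mono order_trans)
qed

lemma has_derivative_average:
  fixes \<phi> :: "nat \<Rightarrow> 'a::real_inner \<Rightarrow> real"
  assumes "\<And>i. i \<in> I \<Longrightarrow> (\<phi> i has_derivative (\<lambda>h. G i y \<bullet> h)) (at y)"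
  shows "((\<lambda>y. (1 / real m) * (\<Sum>i\<in>I. \<phi> i y))
           has_derivative (\<lambda>h. ((1 / real m) *\<^sub>R (\<Sum>i\<in>I. G i y)) \<bullet> h)) (at y)"
proof -
  have "((\<lambda>y. \<Sum>i\<in>I. \<phi> i y) has_derivative (\<lambda>h. \<Sum>i\<in>I. G i y \<bullet> h)) (at y)"
    by (rule has_derivative_sum) (use assms in auto)
  from has_derivative_mult_right[OF this, of "1 / real m"] show ?thesis
    by (simp add: inner_sum_left)
qed

lemma sum_sliding_windows_le:
  fixes D :: "nat \<Rightarrow> real"
  assumes D: "\<And>l. D l \<ge> 0" and p: "K \<le> p"
  shows "(\<Sum>j\<in>{p..<q}. \<Sum>l\<in>{j-K..<j}. D l) \<le> real K * (\<Sum>l\<in>{p-K..<q}. D l)"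
proof -
  have "(\<Sum>j\<in>{p..<q}. \<Sum>l\<in>{j-K..<j}. D l) = (\<Sum>j\<in>{p..<q}. \<Sum>t\<in>{0..<K}. D (j - K + t))"
  proof (rule sum.cong[OF refl])
    fix j assume "j \<in> {p..<q}"
    then have "K \<le> j" using p by auto
    then show "(\<Sum>l\<in>{j-K..<j}. D l) = (\<Sum>t\<in>{0..<K}. D (j - K + t))"
      using sum.atLeastLessThan_shift_0[of D "j - K" j] by (simp add: comp_def)
  qed
  also have "\<dots> = (\<Sum>t\<in>{0..<K}. \<Sum>j\<in>{p..<q}. D (j - K + t))" by (rule sum.swap)
  also have "\<dots> \<le> (\<Sum>t\<in>{0..<K}. \<Sum>l\<in>{p-K..<q}. D l)"
  proof (rule sum_mono)
    fix t assume t: "t \<in> {0..<K}"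
    have inj: "inj_on (\<lambda>j. j - K + t) {p..<q}" using p by (auto simp: inj_on_def)
    have "(\<Sum>j\<in>{p..<q}. D (j - K + t)) = sum D ((\<lambda>j. j - K + t) ` {p..<q})"
      by (simp add: sum.reindex[OF inj] comp_def)
    also have "\<dots> \<le> (\<Sum>l\<in>{p-K..<q}. D l)"
      by (rule sum_mono2) (use t p D in auto)
    finally show "(\<Sum>j\<in>{p..<q}. D (j - K + t)) \<le> (\<Sum>l\<in>{p-K..<q}. D l)" .
  qed
  also have "\<dots> = real K * (\<Sum>l\<in>{p-K..<q}. D l)" by simp
  finally show ?thesis .
qed

lemma nonneg_if_nonneg_plus_small_multiples:
  fixes c D :: real
  assumes D: "D \<ge> 0" and small: "\<And>t. 0 < t \<Longrightarrow> t \<le> 1 \<Longrightarrow> 0 \<le> c + t * D"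
  shows "0 \<le> c"
proof (rule ccontr)
  assume "\<not> 0 \<le> c"
  then have c: "c < 0" by simp
  define t where "t = min 1 (- c / (D + 1))"
  have t0: "0 < t" unfolding t_def using c D by (simp add: field_simps)
  have "t * D \<le> (- c / (D + 1)) * D"
    unfolding t_def using D by (intro mult_right_mono) auto
  also have "\<dots> < - c" using c D by (simp add: field_simps)
  finally show False using small[OF t0] unfolding t_def by auto
qed

lemma is_prox_variational_inequality:
  fixes r :: "'a::real_inner \<Rightarrow> ereal"
  assumes pcc: "proper_closed_convex r" and prox: "is_prox r \<eta> y z" and eta: "\<eta> > 0"
    and rz: "r z = ereal Rz" and rw: "r w = ereal Rw"
  shows "\<eta> * (Rw - Rz) + (z - y) \<bullet> (w - z) \<ge> 0"
proof -
  define c where "c = \<eta> * (Rw - Rz) + (z - y) \<bullet> (w - z)"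
  define D where "D = (norm (w - z))\<^sup>2"
  have key: "0 \<le> c + t * (D / 2)" if t0: "0 < t" and t1: "t \<le> 1" for t
  proof -
    define wt where "wt = (1 - t) *\<^sub>R z + t *\<^sub>R w"
    have "convex (epi r)" using pcc unfolding proper_closed_convex_def by auto
    moreover have "(z, Rz) \<in> epi r" "(w, Rw) \<in> epi r" using rz rw unfolding epi_def by auto
    ultimately have "(wt, (1 - t) * Rz + t * Rw) \<in> epi r"
      using convexD[of "epi r" "(z, Rz)" "(w, Rw)" "1 - t" t] t0 t1
      unfolding wt_def by (simp add: scaleR_prod_def)
    then have rwt: "r wt \<le> ereal ((1 - t) * Rz + t * Rw)" unfolding epi_def by auto
    have "ereal ((norm (z - y))\<^sup>2 / 2) + ereal \<eta> * r z
        \<le> ereal ((norm (wt - y))\<^sup>2 / 2) + ereal \<eta> * r wt"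
      using prox unfolding is_prox_def by blast
    also have "\<dots> \<le> ereal ((norm (wt - y))\<^sup>2 / 2) + ereal \<eta> * ereal ((1 - t) * Rz + t * Rw)"
      using rwt eta by (intro add_left_mono ereal_mult_left_mono) auto
    finally have "(norm (z - y))\<^sup>2 / 2 + \<eta> * Rz \<le> (norm (wt - y))\<^sup>2 / 2 + \<eta> * ((1 - t) * Rz + t * Rw)"
      using rz by simp
    moreover have "wt - y = (z - y) + t *\<^sub>R (w - z)" unfolding wt_def by (simp add: algebra_simps)
    then have "(norm (wt - y))\<^sup>2 = (norm (z - y))\<^sup>2 + 2 * t * ((z - y) \<bullet> (w - z)) + t\<^sup>2 * D"
      unfolding D_def by (simp only: norm_add_scaleR_power2)
    ultimately have "0 \<le> t * (c + t * (D / 2))"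
      unfolding c_def by (simp add: algebra_simps power2_eq_square add_divide_distrib)
    then show ?thesis using t0 by (simp add: zero_le_mult_iff)
  qed
  have "0 \<le> c"
    by (rule nonneg_if_nonneg_plus_small_multiples[of "D / 2"]) (use key D_def in auto)
  then show ?thesis unfolding c_def .
qed

lemma is_prox_finite:
  assumes pcc: "proper_closed_convex r" and prox: "is_prox r \<eta> y z" and eta: "\<eta> > 0"
  shows "r z = ereal (real_of_ereal (r z))"
proof -
  obtain w where w: "r w \<noteq> \<infinity>" using pcc unfolding proper_closed_convex_def by auto
  have not_minf: "r v \<noteq> -\<infinity>" for v using pcc unfolding proper_closed_convex_def by auto
  have "ereal ((norm (z - y))\<^sup>2 / 2) + ereal \<eta> * r z \<le> ereal ((norm (w - y))\<^sup>2 / 2) + ereal \<eta> * r w"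
    using prox unfolding is_prox_def by blast
  moreover have "ereal \<eta> * r w \<noteq> \<infinity>" using w not_minf[of w] eta by (cases "r w") auto
  ultimately have "r z \<noteq> \<infinity>" using eta by auto
  then show ?thesis using not_minf[of z] by (cases "r z") auto
qed

lemma has_field_derivative_along_line:
  fixes \<phi> :: "'a::real_inner \<Rightarrow> real"
  assumes der: "\<And>y. (\<phi> has_derivative (\<lambda>h. G y \<bullet> h)) (at y)"
  shows "((\<lambda>t. \<phi> (x + t *\<^sub>R v)) has_field_derivative (G (x + t *\<^sub>R v) \<bullet> v)) (at t)"
proof -
  have "((\<lambda>t. x + t *\<^sub>R v) has_derivative (\<lambda>s. s *\<^sub>R v)) (at t)"
    by (auto intro!: derivative_eq_intros)
  from has_derivative_compose[OF this der]
  have "((\<lambda>t. \<phi> (x + t *\<^sub>R v)) has_derivative (\<lambda>s. G (x + t *\<^sub>R v) \<bullet> (s *\<^sub>R v))) (at t)" .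
  moreover have "(\<lambda>s. G (x + t *\<^sub>R v) \<bullet> (s *\<^sub>R v)) = (*) (G (x + t *\<^sub>R v) \<bullet> v)"
    by (auto simp: mult.commute)
  ultimately show ?thesis by (simp add: has_field_derivative_def)
qed

lemma lipschitz_gradient_upper_bound:
  fixes \<phi> :: "'a::real_inner \<Rightarrow> real"
  assumes der: "\<And>y. (\<phi> has_derivative (\<lambda>h. G y \<bullet> h)) (at y)"
    and lip: "\<And>y z. norm (G y - G z) \<le> L * norm (y - z)"
  shows "\<phi> y \<le> \<phi> x + G x \<bullet> (y - x) + L / 2 * (norm (y - x))\<^sup>2"
proof -
  define v where "v = y - x"
  define h where "h = (\<lambda>t. \<phi> (x + t *\<^sub>R v) - t * (G x \<bullet> v) - L / 2 * t\<^sup>2 * (norm v)\<^sup>2)"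
  have dh: "DERIV h t :> (G (x + t *\<^sub>R v) - G x) \<bullet> v - L * t * (norm v)\<^sup>2" for t
    unfolding h_def inner_diff_left
    by (rule derivative_eq_intros has_field_derivative_along_line[OF der] | simp)+
  have "h 1 \<le> h 0"
  proof (rule DERIV_nonpos_imp_nonincreasing[of 0 1 h])
    fix t :: real assume t: "0 \<le> t" "t \<le> 1"
    have "(G (x + t *\<^sub>R v) - G x) \<bullet> v \<le> norm (G (x + t *\<^sub>R v) - G x) * norm v"
      by (rule norm_cauchy_schwarz)
    also have "\<dots> \<le> (L * norm (t *\<^sub>R v)) * norm v"
      using lip[of "x + t *\<^sub>R v" x] by (intro mult_right_mono) auto
    also have "\<dots> = L * t * (norm v)\<^sup>2" using t by (simp add: power2_eq_square)
    finally show "\<exists>y. DERIV h t :> y \<and> y \<le> 0" using dh[of t] by auto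
  qed simp
  then show ?thesis unfolding h_def v_def by simp
qed

lemma convex_on_along_line:
  fixes \<psi> :: "'a::real_vector \<Rightarrow> real"
  assumes "convex_on UNIV \<psi>"
  shows "convex_on UNIV (\<lambda>t. \<psi> (x + t *\<^sub>R v))"
proof (rule convex_onI)
  fix s t u :: real assume u: "0 < u" "u < 1"
  have "x + ((1 - u) *\<^sub>R s + u *\<^sub>R t) *\<^sub>R v = (1 - u) *\<^sub>R (x + s *\<^sub>R v) + u *\<^sub>R (x + t *\<^sub>R v)"
    by (simp add: algebra_simps)
  then show "\<psi> (x + ((1 - u) *\<^sub>R s + u *\<^sub>R t) *\<^sub>R v) \<le> (1 - u) * \<psi> (x + s *\<^sub>R v) + u * \<psi> (x + t *\<^sub>R v)"
    using convex_onD[OF assms, of u] u by simp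
qed simp

lemma strongly_convex_lower_bound:
  fixes \<phi> :: "'a::real_inner \<Rightarrow> real"
  assumes der: "\<And>y. (\<phi> has_derivative (\<lambda>h. G y \<bullet> h)) (at y)"
    and cvx: "convex_on UNIV (\<lambda>y. \<phi> y - \<mu> / 2 * (norm y)\<^sup>2)"
  shows "\<phi> x + G x \<bullet> (y - x) + \<mu> / 2 * (norm (y - x))\<^sup>2 \<le> \<phi> y"
proof -
  define v where "v = y - x"
  define \<psi> where "\<psi> = (\<lambda>y. \<phi> y - \<mu> / 2 * (norm y)\<^sup>2)"
  have cv: "convex_on UNIV (\<lambda>t. \<psi> (x + t *\<^sub>R v))"
    using convex_on_along_line cvx unfolding \<psi>_def by blast
  have d: "((\<lambda>t. \<psi> (x + t *\<^sub>R v)) has_field_derivative (G x \<bullet> v - \<mu> * (x \<bullet> v))) (at 0)"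
    unfolding \<psi>_def norm_add_scaleR_power2
    by (rule derivative_eq_intros has_field_derivative_along_line[OF der] | simp add: inner_commute)+
  from convex_on_imp_above_tangent[OF cv _ _ _ d, of 1]
  have "G x \<bullet> v - \<mu> * (x \<bullet> v) \<le> \<psi> (x + v) - \<psi> x" by simp
  moreover have "(norm (y - x))\<^sup>2 = (norm y)\<^sup>2 - 2 * (x \<bullet> y) + (norm x)\<^sup>2"
    by (simp add: power2_norm_eq_inner inner_diff_left inner_diff_right inner_commute)
  ultimately show ?thesis
    unfolding \<psi>_def v_def norm_add_scaleR_power2 by (simp add: algebra_simps power2_norm_eq_inner)
qed

lemma strong_convexity_modulus_le_lipschitz_constant:
  fixes \<phi> :: "'a::euclidean_space \<Rightarrow> real"
  assumes der: "\<And>y. (\<phi> has_derivative (\<lambda>h. G y \<bullet> h)) (at y)"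
    and lip: "\<And>y z. norm (G y - G z) \<le> L * norm (y - z)"
    and cvx: "convex_on UNIV (\<lambda>y. \<phi> y - \<mu> / 2 * (norm y)\<^sup>2)"
  shows "\<mu> \<le> L"
proof -
  obtain b :: 'a where "b \<in> Basis" using nonempty_Basis by blast
  then have "norm b = 1" by simp
  with strongly_convex_lower_bound[OF der cvx, of 0 b] lipschitz_gradient_upper_bound[OF der lip, of b 0]
  show ?thesis by simp
qed

lemma contraction_of_two_upper_bounds:
  fixes e d u :: "'a::real_inner"
  assumes descent: "N \<le> P - \<eta> * (norm d)\<^sup>2 + \<eta> * (e \<bullet> d) + L * \<eta>\<^sup>2 / 2 * (norm d)\<^sup>2"
    and optimality: "N \<le> (e - d) \<bullet> (u + \<eta> *\<^sub>R d) - \<mu> / 2 * (norm u)\<^sup>2 + L * \<eta>\<^sup>2 / 2 * (norm d)\<^sup>2"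
    and eta: "\<eta> > 0" and mu: "\<mu> > 0" and etaL: "\<eta> * L \<le> 1" and etamu: "\<eta> * \<mu> \<le> 1"
  shows "(1 + \<eta> * \<mu> / 8) * N \<le> P + \<eta> * (norm e)\<^sup>2"
proof -
  txt \<open>Add \<open>s\<close> times the second bound to the first; the cross terms are absorbed by Young's
    inequality.\<close>
  define s where "s = \<eta> * \<mu> / 8"
  define D where "D = (norm d)\<^sup>2"
  define E where "E = (norm e)\<^sup>2"
  define X where "X = - D + e \<bullet> d + L * \<eta> / 2 * D"
  have s0: "0 \<le> s" and s1: "s \<le> 1/8" using eta mu etamu unfolding s_def by auto
  have D0: "D \<ge> 0" and E0: "E \<ge> 0" unfolding D_def E_def by auto
  have A: "N \<le> P + \<eta> * X"
    using descent unfolding X_def D_def by (simp add: algebra_simps power2_eq_square)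
  have "(e - d) \<bullet> (u + \<eta> *\<^sub>R d) = (e - d) \<bullet> u + \<eta> * (e \<bullet> d) - \<eta> * D"
    unfolding D_def by (simp add: inner_add_right inner_diff_left power2_norm_eq_inner right_diff_distrib)
  moreover have "\<eta> * X = - \<eta> * D + \<eta> * (e \<bullet> d) + L * \<eta>\<^sup>2 / 2 * D"
    unfolding X_def by (simp add: algebra_simps power2_eq_square)
  ultimately have B: "N \<le> (e - d) \<bullet> u - \<mu> / 2 * (norm u)\<^sup>2 + \<eta> * X"
    using optimality unfolding D_def by linarith
  have T: "(1 + s) * N \<le> P + (1 + s) * \<eta> * X + s * ((e - d) \<bullet> u - \<mu> / 2 * (norm u)\<^sup>2)"
    using A mult_left_mono[OF B s0] by (simp add: algebra_simps)
  have "s * ((e - d) \<bullet> u - \<mu> / 2 * (norm u)\<^sup>2) = \<eta> / 8 * (\<mu> * ((e - d) \<bullet> u) - \<mu>\<^sup>2 / 2 * (norm u)\<^sup>2)"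
    unfolding s_def by (simp add: algebra_simps power2_eq_square)
  also have "\<dots> \<le> \<eta> / 8 * ((norm (e - d))\<^sup>2 / 2)"
    using eta inner_minus_power2_le by (intro mult_left_mono) auto
  also have "\<dots> \<le> \<eta> / 8 * (E + D)"
    using eta norm_diff_power2_le[of e d] unfolding E_def D_def by (intro mult_left_mono) auto
  finally have Q: "s * ((e - d) \<bullet> u - \<mu> / 2 * (norm u)\<^sup>2) \<le> \<eta> / 8 * (E + D)" .
  have "X \<le> - D / 8 + 2 / 3 * E"
  proof -
    have "2 * (e \<bullet> d) \<le> 4/3 * E + 3/4 * D"
      using inner_le_young[of "4/3" e d] unfolding E_def D_def by simp
    moreover have "L * \<eta> * D \<le> D" using mult_right_mono[OF etaL D0] by (simp add: mult.commute)
    ultimately show ?thesis unfolding X_def by simp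
  qed
  then have X: "(1 + s) * \<eta> * X \<le> (1 + s) * \<eta> * (- D / 8 + 2 / 3 * E)"
    using s0 eta by (intro mult_left_mono) auto
  have "(1 + s) * N \<le> P + (1 + s) * \<eta> * (- D / 8 + 2 / 3 * E) + \<eta> / 8 * (E + D)"
    using T Q X by linarith
  also have "\<dots> = P + \<eta> * E * (19 / 24 + 2 / 3 * s) - \<eta> * s * D / 8"
    by (simp add: field_simps)
  also have "\<dots> \<le> P + \<eta> * E * 1"
  proof -
    have "\<eta> * E * (19 / 24 + 2 / 3 * s) \<le> \<eta> * E * 1"
      using s1 eta E0 by (intro mult_left_mono) auto
    moreover have "0 \<le> \<eta> * s * D" using eta s0 D0 by simp
    ultimately show ?thesis by linarith
  qed
  finally show ?thesis unfolding s_def E_def by simp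
qed

text \<open>The iteration for a smooth \<open>f\<close> with gradient \<open>G\<close> and an arbitrary gradient estimate \<open>g\<close>:
  the incremental structure of PIAG enters only through \<open>delay_error\<close>.\<close>

locale piag =
  fixes f :: "'a::euclidean_space \<Rightarrow> real" and G :: "'a \<Rightarrow> 'a" and L \<mu> :: real
    and r :: "'a \<Rightarrow> ereal" and xstar :: 'a
    and \<eta> :: real and K :: nat and x :: "nat \<Rightarrow> 'a" and g :: "nat \<Rightarrow> 'a"
  assumes f_deriv: "\<And>y. (f has_derivative (\<lambda>h. G y \<bullet> h)) (at y)"
    and G_lipschitz: "\<And>y z. norm (G y - G z) \<le> L * norm (y - z)"
    and mu_pos: "\<mu> > 0"
    and strongly_convex: "convex_on UNIV (\<lambda>y. f y - \<mu> / 2 * (norm y)\<^sup>2)"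
    and r_pcc: "proper_closed_convex r"
    and xstar_min: "\<And>z. ereal (f xstar) + r xstar \<le> ereal (f z) + r z"
    and iter: "\<And>j. is_prox r \<eta> (x j - \<eta> *\<^sub>R g j) (x (Suc j))"
    and eta_pos: "\<eta> > 0"
    and eta_le: "\<eta> * L * (real K + 1) \<le> 1"
    and delay_error: "\<And>j. norm (G (x j) - g j) \<le> L * (\<Sum>l\<in>{j-K..<j}. norm (x (Suc l) - x l))"
begin

definition objective :: "'a \<Rightarrow> ereal" where
  "objective y = ereal (f y) + r y"

text \<open>\<open>r (x 0)\<close> may be infinite, so \<open>gap 0\<close> is a junk value; all later iterates lie in the
  domain of \<open>r\<close> (\<open>r_finite_at_iterate\<close>).\<close>

definition gap :: "nat \<Rightarrow> real" where
  "gap j = real_of_ereal (objective (x j) - objective xstar)"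

definition d :: "nat \<Rightarrow> 'a" where
  "d j = (1 / \<eta>) *\<^sub>R (x (Suc j) - x j)"

definition sq_steps :: "nat \<Rightarrow> nat \<Rightarrow> real" where
  "sq_steps p q = (\<Sum>l\<in>{p..<q}. (norm (d l))\<^sup>2)"

definition delay_weight :: "nat \<Rightarrow> real" where
  "delay_weight i = 2 * \<eta> * L * (\<eta> * real K * L) ^ (i - 1)"

lemma mu_le_L: "\<mu> \<le> L"
  using strong_convexity_modulus_le_lipschitz_constant[OF f_deriv G_lipschitz strongly_convex] .

lemma L_pos: "L > 0"
  using mu_le_L mu_pos by linarith

lemma eta_L_K_le: "\<eta> * L * real K \<le> 1" and eta_L_le: "\<eta> * L \<le> 1" and eta_mu_le: "\<eta> * \<mu> \<le> 1"
proof -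
  have "0 \<le> \<eta> * L" using eta_pos L_pos by simp
  then show "\<eta> * L * real K \<le> 1" "\<eta> * L \<le> 1"
    using eta_le mult_left_mono[of "real K" "real K + 1" "\<eta> * L"]
      mult_left_mono[of 1 "real K + 1" "\<eta> * L"] by auto
  then show "\<eta> * \<mu> \<le> 1" using mu_le_L eta_pos mult_left_mono[of \<mu> L \<eta>] by linarith
qed

lemma x_Suc: "x (Suc j) = x j + \<eta> *\<^sub>R d j"
  using eta_pos by (simp add: d_def)

lemma delay_error_steps: "norm (G (x j) - g j) \<le> \<eta> * L * (\<Sum>l\<in>{j-K..<j}. norm (d l))"
  using delay_error[of j] eta_pos by (simp add: x_Suc sum_distrib_left mult_ac)

lemma r_finite_at_iterate: "r (x (Suc j)) = ereal (real_of_ereal (r (x (Suc j))))"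
  by (rule is_prox_finite[OF r_pcc iter eta_pos])

lemma r_finite_at_minimizer: "r xstar = ereal (real_of_ereal (r xstar))"
proof -
  have "r xstar \<noteq> \<infinity>"
    using xstar_min[of "x 1"] r_finite_at_iterate[of 0] by auto
  moreover have "r xstar \<noteq> -\<infinity>" using r_pcc unfolding proper_closed_convex_def by auto
  ultimately show ?thesis by (cases "r xstar") auto
qed

lemma gap_eq:
  assumes "1 \<le> j"
  shows "gap j = f (x j) + real_of_ereal (r (x j)) - (f xstar + real_of_ereal (r xstar))"
proof -
  obtain i where "j = Suc i" using assms by (cases j) auto
  then obtain a b where "r (x j) = ereal a" "r xstar = ereal b"
    using r_finite_at_iterate r_finite_at_minimizer by metis
  then show ?thesis unfolding gap_def objective_def by simp
qed

lemma prox_step_le: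
  assumes "r w = ereal Rw"
  shows "real_of_ereal (r (x (Suc j))) \<le> Rw + (d j + g j) \<bullet> (w - x (Suc j))"
proof -
  have "0 \<le> \<eta> * (Rw - real_of_ereal (r (x (Suc j))))
      + (x (Suc j) - (x j - \<eta> *\<^sub>R g j)) \<bullet> (w - x (Suc j))"
    by (rule is_prox_variational_inequality[OF r_pcc iter eta_pos r_finite_at_iterate assms])
  also have "x (Suc j) - (x j - \<eta> *\<^sub>R g j) = \<eta> *\<^sub>R (d j + g j)"
    by (simp add: x_Suc algebra_simps)
  finally have "0 \<le> \<eta> * (Rw - real_of_ereal (r (x (Suc j))) + (d j + g j) \<bullet> (w - x (Suc j)))"
    by (simp add: distrib_left)
  then show ?thesis using eta_pos by (simp add: zero_le_mult_iff)
qed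

lemma f_Suc_le: "f (x (Suc j)) \<le> f (x j) + \<eta> * (G (x j) \<bullet> d j) + L * \<eta>\<^sup>2 / 2 * (norm (d j))\<^sup>2"
  using lipschitz_gradient_upper_bound[OF f_deriv G_lipschitz, of "x (Suc j)" "x j"] eta_pos
  by (simp add: x_Suc power_mult_distrib)

lemma gap_Suc_le_descent:
  assumes "1 \<le> j"
  shows "gap (Suc j) \<le> gap j - \<eta> * (norm (d j))\<^sup>2 + \<eta> * ((G (x j) - g j) \<bullet> d j)
           + L * \<eta>\<^sup>2 / 2 * (norm (d j))\<^sup>2"
proof -
  obtain i where "j = Suc i" using assms by (cases j) auto
  then have "r (x j) = ereal (real_of_ereal (r (x j)))" by (metis r_finite_at_iterate)
  from prox_step_le[OF this, of j]
  have "real_of_ereal (r (x (Suc j))) \<le> real_of_ereal (r (x j)) - \<eta> * ((d j + g j) \<bullet> d j)"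
    by (simp add: x_Suc)
  with f_Suc_le[of j]
  have "gap (Suc j) \<le> gap j + \<eta> * (G (x j) \<bullet> d j) + L * \<eta>\<^sup>2 / 2 * (norm (d j))\<^sup>2
      - \<eta> * ((d j + g j) \<bullet> d j)"
    using gap_eq[OF assms] gap_eq[of "Suc j"] by simp
  also have "\<dots> = gap j - \<eta> * (norm (d j))\<^sup>2 + \<eta> * ((G (x j) - g j) \<bullet> d j)
      + L * \<eta>\<^sup>2 / 2 * (norm (d j))\<^sup>2"
    by (simp add: inner_add_left inner_diff_left power2_norm_eq_inner algebra_simps)
  finally show ?thesis .
qed

lemma gap_Suc_le_optimality:
  assumes "1 \<le> j"
  shows "gap (Suc j) \<le> ((G (x j) - g j) - d j) \<bullet> ((x j - xstar) + \<eta> *\<^sub>R d j)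
           - \<mu> / 2 * (norm (x j - xstar))\<^sup>2 + L * \<eta>\<^sup>2 / 2 * (norm (d j))\<^sup>2"
proof -
  define u where "u = x j - xstar"
  have "f (x j) + G (x j) \<bullet> (xstar - x j) + \<mu> / 2 * (norm u)\<^sup>2 \<le> f xstar"
    using strongly_convex_lower_bound[OF f_deriv strongly_convex, of "x j" xstar]
    by (simp add: u_def norm_minus_commute)
  moreover have "G (x j) \<bullet> (xstar - x j) = - (G (x j) \<bullet> u)"
    by (simp add: u_def inner_diff_right)
  moreover have step: "xstar - x (Suc j) = - (u + \<eta> *\<^sub>R d j)"
    by (simp add: u_def x_Suc)
  have "real_of_ereal (r (x (Suc j)))
      \<le> real_of_ereal (r xstar) - (d j + g j) \<bullet> (u + \<eta> *\<^sub>R d j)"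
    using prox_step_le[OF r_finite_at_minimizer, of j] unfolding step inner_minus_right by simp
  moreover have "((G (x j) - g j) - d j) \<bullet> (u + \<eta> *\<^sub>R d j)
      = G (x j) \<bullet> u + \<eta> * (G (x j) \<bullet> d j) - (d j + g j) \<bullet> (u + \<eta> *\<^sub>R d j)"
    by (simp add: inner_diff_left inner_add_left inner_add_right algebra_simps)
  ultimately show ?thesis
    using f_Suc_le[of j] gap_eq[OF assms] gap_eq[of "Suc j", simplified] unfolding u_def[symmetric] by linarith
qed

lemma sq_steps_nonneg: "sq_steps p q \<ge> 0"
  unfolding sq_steps_def by (simp add: sum_nonneg)

lemma gap_contraction:
  assumes "1 \<le> j" and "K \<le> j"
  shows "(1 + \<eta> * \<mu> / 8) * gap (Suc j) \<le> gap j + \<eta>\<^sup>2 * L * sq_steps (j - K) j"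
proof -
  define S where "S = (\<Sum>l\<in>{j-K..<j}. norm (d l))"
  have "(1 + \<eta> * \<mu> / 8) * gap (Suc j) \<le> gap j + \<eta> * (norm (G (x j) - g j))\<^sup>2"
    by (rule contraction_of_two_upper_bounds[OF gap_Suc_le_descent[OF assms(1)]
        gap_Suc_le_optimality[OF assms(1)] eta_pos mu_pos eta_L_le eta_mu_le])
  also have "\<eta> * (norm (G (x j) - g j))\<^sup>2 \<le> \<eta> * (\<eta> * L * S)\<^sup>2"
    using delay_error_steps[of j] eta_pos unfolding S_def
    by (intro mult_left_mono power_mono) auto
  also have "\<dots> = (\<eta> ^ 3 * L\<^sup>2) * S\<^sup>2"
    by (simp add: power_mult_distrib power2_eq_square power3_eq_cube)
  also have "\<dots> \<le> (\<eta> ^ 3 * L\<^sup>2) * (real K * sq_steps (j - K) j)"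
    using sum_squared_le_sum_of_squares[of "\<lambda>l. norm (d l)" "{j-K..<j}"] assms(2) eta_pos
    unfolding S_def sq_steps_def by (intro mult_left_mono) (auto simp: mult.commute)
  also have "\<dots> = (\<eta> * L * real K) * (\<eta>\<^sup>2 * L * sq_steps (j - K) j)"
    by (simp add: power2_eq_square power3_eq_cube)
  also have "\<dots> \<le> \<eta>\<^sup>2 * L * sq_steps (j - K) j"
    using eta_L_K_le eta_pos L_pos sq_steps_nonneg[of "j - K" j]
    by (intro mult_left_le_one_le) auto
  finally show ?thesis by simp
qed

lemma gap_sufficient_decrease:
  assumes "1 \<le> j" and "K \<le> j"
  shows "\<eta> / 2 * (norm (d j))\<^sup>2 - \<eta>\<^sup>2 * L / 2 * sq_steps (j - K) j \<le> gap j - gap (Suc j)"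
proof -
  define S where "S = (\<Sum>l\<in>{j-K..<j}. norm (d l))"
  define D where "D = (norm (d j))\<^sup>2"
  have "(G (x j) - g j) \<bullet> d j \<le> (\<eta> * L * S) * norm (d j)"
    using norm_cauchy_schwarz[of "G (x j) - g j" "d j"] delay_error_steps[of j]
    unfolding S_def by (meson mult_right_mono norm_ge_zero order_trans)
  also have "\<dots> = \<eta> * L * (\<Sum>l\<in>{j-K..<j}. norm (d l) * norm (d j))"
    unfolding S_def by (simp add: sum_distrib_right)
  also have "\<dots> \<le> \<eta> * L * (\<Sum>l\<in>{j-K..<j}. ((norm (d l))\<^sup>2 + D) / 2)"
  proof -
    have "norm (d l) * norm (d j) \<le> ((norm (d l))\<^sup>2 + D) / 2" for l
      using sum_squares_bound[of "norm (d l)" "norm (d j)"] unfolding D_def by simp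
    then show ?thesis using eta_pos L_pos by (intro mult_left_mono sum_mono) auto
  qed
  also have "\<dots> = \<eta> * L * ((sq_steps (j - K) j + real K * D) / 2)"
    using assms(2) by (simp add: sq_steps_def sum.distrib add_divide_distrib sum_divide_distrib)
  finally have "\<eta> * ((G (x j) - g j) \<bullet> d j) \<le> \<eta> * (\<eta> * L * ((sq_steps (j - K) j + real K * D) / 2))"
    by (rule mult_left_mono) (use eta_pos in simp)
  also have "\<dots> = \<eta>\<^sup>2 * L / 2 * sq_steps (j - K) j + \<eta> * L * real K * (\<eta> * D / 2)"
    by (simp add: power2_eq_square algebra_simps)
  moreover have "\<eta> * L * (real K + 1) * (\<eta> * D / 2) \<le> \<eta> * D / 2"
    using eta_le eta_pos L_pos unfolding D_def by (intro mult_left_le_one_le) auto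
  moreover have "L * \<eta>\<^sup>2 / 2 * D + \<eta> * L * real K * (\<eta> * D / 2) = \<eta> * L * (real K + 1) * (\<eta> * D / 2)"
    by (simp add: algebra_simps power2_eq_square)
  moreover have "\<eta> / 2 * D = \<eta> * D / 2" by simp
  ultimately show ?thesis
    using gap_Suc_le_descent[OF assms(1)] unfolding D_def[symmetric] by linarith
qed

lemma gap_window_decrease:
  assumes "1 \<le> p" and "K \<le> p" and "p \<le> q"
  shows "\<eta> / 2 * sq_steps p q \<le> gap p - gap q + \<eta>\<^sup>2 * L * real K / 2 * sq_steps (p - K) q"
proof -
  have "\<eta> / 2 * sq_steps p q - \<eta>\<^sup>2 * L / 2 * (\<Sum>j\<in>{p..<q}. sq_steps (j - K) j)
      = (\<Sum>j\<in>{p..<q}. \<eta> / 2 * (norm (d j))\<^sup>2 - \<eta>\<^sup>2 * L / 2 * sq_steps (j - K) j)"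
    unfolding sq_steps_def by (simp add: sum_subtractf sum_distrib_left)
  also have "\<dots> \<le> (\<Sum>j\<in>{p..<q}. gap j - gap (Suc j))"
    using assms by (intro sum_mono gap_sufficient_decrease) auto
  also have "\<dots> = gap p - gap q"
    using sum_Suc_diff'[OF assms(3), of gap] by (simp add: sum_subtractf)
  finally have "\<eta> / 2 * sq_steps p q \<le> gap p - gap q + \<eta>\<^sup>2 * L / 2 * (\<Sum>j\<in>{p..<q}. sq_steps (j - K) j)"
    by simp
  moreover have "(\<Sum>j\<in>{p..<q}. sq_steps (j - K) j) \<le> real K * sq_steps (p - K) q"
    unfolding sq_steps_def by (rule sum_sliding_windows_le[OF _ assms(2)]) simp
  then have "\<eta>\<^sup>2 * L / 2 * (\<Sum>j\<in>{p..<q}. sq_steps (j - K) j) \<le> \<eta>\<^sup>2 * L / 2 * (real K * sq_steps (p - K) q)"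
    using L_pos by (intro mult_left_mono) auto
  ultimately show ?thesis by (simp add: algebra_simps)
qed

lemma gap_contraction_unrolled:
  assumes "1 \<le> n" and "n * K + 1 \<le> k"
  shows "\<eta>\<^sup>2 * L * sq_steps (k - K) k
    \<le> (\<Sum>i=1..n-1. delay_weight i * (gap (k - i * K) - gap k))
       + \<eta>\<^sup>2 * L * (\<eta> * real K * L) ^ (n - 1) * sq_steps (k - n * K) k"
  using assms
proof (induction n rule: nat_induct_at_least)
  case base
  then show ?case by simp
next
  case (Suc n)
  define p where "p = k - n * K"
  have "1 \<le> p" "K \<le> p" "p \<le> k" "p - K = k - Suc n * K"
    using Suc.prems unfolding p_def by auto
  have "0 \<le> delay_weight n"
    unfolding delay_weight_def using eta_pos L_pos by simp
  from mult_left_mono[OF gap_window_decrease[OF \<open>1 \<le> p\<close> \<open>K \<le> p\<close> \<open>p \<le> k\<close>] this]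
  have "\<eta>\<^sup>2 * L * (\<eta> * real K * L) ^ (n - 1) * sq_steps p k
      \<le> delay_weight n * (gap p - gap k)
         + \<eta>\<^sup>2 * L * (\<eta> * real K * L) ^ n * sq_steps (k - Suc n * K) k"
    using Suc.hyps \<open>p - K = k - Suc n * K\<close>
    by (cases n) (simp_all add: delay_weight_def power2_eq_square algebra_simps)
  moreover have "(\<Sum>i=1..Suc n - 1. delay_weight i * (gap (k - i * K) - gap k))
      = (\<Sum>i=1..n-1. delay_weight i * (gap (k - i * K) - gap k)) + delay_weight n * (gap p - gap k)"
    using Suc.hyps unfolding p_def by (cases n) auto
  ultimately show ?case
    using Suc.IH Suc.prems unfolding p_def by simp
qed

lemma gap_recursion:
  assumes "2 \<le> a" and "a * K + 1 \<le> k"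
  shows "(1 + \<eta> * \<mu> / 8) * gap (Suc k)
           \<le> (1 - (\<Sum>i=1..a-1. delay_weight i)) * gap k + (\<Sum>i=1..a-1. delay_weight i * gap (k - i * K))
             + \<eta>\<^sup>2 * (real K * L / 2) * delay_weight (a - 1) * (\<Sum>j=k - a * K..k - 1. (norm (d j))\<^sup>2)"
proof -
  have "K \<le> a * K" using assms(1) by simp
  then have "1 \<le> k" and "K \<le> k" using assms(2) by linarith+
  then have "(1 + \<eta> * \<mu> / 8) * gap (Suc k) \<le> gap k + \<eta>\<^sup>2 * L * sq_steps (k - K) k"
    by (rule gap_contraction)
  also have "\<dots> \<le> gap k + (\<Sum>i=1..a-1. delay_weight i * (gap (k - i * K) - gap k))
       + \<eta>\<^sup>2 * L * (\<eta> * real K * L) ^ (a - 1) * sq_steps (k - a * K) k"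
    using gap_contraction_unrolled[of a k] assms by simp
  also have "(\<Sum>i=1..a-1. delay_weight i * (gap (k - i * K) - gap k))
      = (\<Sum>i=1..a-1. delay_weight i * gap (k - i * K)) - (\<Sum>i=1..a-1. delay_weight i) * gap k"
    by (simp add: right_diff_distrib sum_subtractf sum_distrib_right)
  also have "\<eta>\<^sup>2 * L * (\<eta> * real K * L) ^ (a - 1) = \<eta>\<^sup>2 * (real K * L / 2) * delay_weight (a - 1)"
  proof -
    obtain b where "a = Suc (Suc b)" using assms(1) by (metis add_2_eq_Suc le_Suc_ex)
    then show ?thesis by (simp add: delay_weight_def power2_eq_square)
  qed
  also have "sq_steps (k - a * K) k = (\<Sum>j=k - a * K..k - 1. (norm (d j))\<^sup>2)"
    using assms(2) unfolding sq_steps_def by (intro sum.cong) auto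
  finally show ?thesis by (simp add: algebra_simps)
qed

end

theorem theorem1:
  fixes m :: nat and fi :: "nat \<Rightarrow> 'a::euclidean_space \<Rightarrow> real"
    and grad :: "nat \<Rightarrow> 'a \<Rightarrow> 'a" and Li :: "nat \<Rightarrow> real"
    and \<mu> :: real and r :: "'a \<Rightarrow> ereal" and xstar :: 'a
    and K :: nat and \<eta> :: real and x :: "nat \<Rightarrow> 'a" and \<tau> :: "nat \<Rightarrow> nat \<Rightarrow> nat"
    and a :: nat and k :: nat
  defines "f \<equiv> \<lambda>y. (1 / real m) * (\<Sum>i\<in>{1..m}. fi i y)"
    and "L \<equiv> (1 / real m) * (\<Sum>i\<in>{1..m}. Li i)"
  defines "F \<equiv> \<lambda>y. ereal (f y) + r y"
  defines "Fk \<equiv> \<lambda>j. real_of_ereal (F (x j) - F xstar)"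
    and "d \<equiv> \<lambda>j. (1 / \<eta>) *\<^sub>R (x (Suc j) - x j)"
    and "g \<equiv> \<lambda>j. (1 / real m) *\<^sub>R (\<Sum>i\<in>{1..m}. grad i (x (\<tau> i j)))"
    and "\<epsilon> \<equiv> \<lambda>i::nat. 2 * \<eta> * L * (\<eta> * real K * L) ^ (i - 1)"
  assumes m_pos: "m \<ge> 1"
    and deriv: "\<And>i y. i \<in> {1..m} \<Longrightarrow> (fi i has_derivative (\<lambda>h. grad i y \<bullet> h)) (at y)"
    and grad_cont: "\<And>i. i \<in> {1..m} \<Longrightarrow> continuous_on UNIV (grad i)"
    and Li_nonneg: "\<And>i. i \<in> {1..m} \<Longrightarrow> Li i \<ge> 0"
    and lipschitz: "\<And>i y z. i \<in> {1..m} \<Longrightarrow> norm (grad i y - grad i z) \<le> Li i * norm (y - z)"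
    and mu_pos: "\<mu> > 0"
    and strongly_convex: "convex_on UNIV (\<lambda>y. f y - \<mu> / 2 * (norm y)\<^sup>2)"
    and r_pcc: "proper_closed_convex r"
    and xstar_min: "\<And>z. F xstar \<le> F z"
    and tau_bounds: "\<And>i j. i \<in> {1..m} \<Longrightarrow> j - K \<le> \<tau> i j \<and> \<tau> i j \<le> j"
    and iter: "\<And>j. is_prox r \<eta> (x j - \<eta> *\<^sub>R g j) (x (Suc j))"
    and eta_pos: "\<eta> > 0"
    and eta_le: "\<eta> * L * (real K + 1) \<le> 1"
    and a_ge: "a \<ge> 2"
    and k_ge: "k \<ge> a * K + 1"
  shows "(1 + \<eta> * \<mu> / 8) * Fk (Suc k)
           \<le> (1 - (\<Sum>i=1..a-1. \<epsilon> i)) * Fk k + (\<Sum>i=1..a-1. \<epsilon> i * Fk (k - i * K))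
             + \<eta>\<^sup>2 * (real K * L / 2) * \<epsilon> (a - 1) * (\<Sum>j=k - a * K..k - 1. (norm (d j))\<^sup>2)"
proof -
  define G where "G = (\<lambda>y. (1 / real m) *\<^sub>R (\<Sum>i\<in>{1..m}. grad i y))"
  interpret P: piag f G L \<mu> r xstar \<eta> K x g
  proof
    show "(f has_derivative (\<lambda>h. G y \<bullet> h)) (at y)" for y
      unfolding f_def G_def by (rule has_derivative_average) (rule deriv)
    show "norm (G y - G z) \<le> L * norm (y - z)" for y z
      unfolding G_def L_def by (rule norm_average_diff_le) (rule lipschitz)
    show "norm (G (x j) - g j) \<le> L * (\<Sum>l\<in>{j-K..<j}. norm (x (Suc l) - x l))" for j
      unfolding G_def g_def L_def
      by (rule norm_delayed_average_diff_le) (use lipschitz Li_nonneg tau_bounds in auto)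
  qed (use mu_pos strongly_convex r_pcc xstar_min iter eta_pos eta_le in \<open>auto simp: F_def\<close>)
  have "Fk = P.gap" "d = P.d" "\<epsilon> = P.delay_weight"
    by (simp_all add: fun_eq_iff Fk_def F_def P.gap_def P.objective_def d_def P.d_def
        \<epsilon>_def P.delay_weight_def)
  with P.gap_recursion[OF a_ge k_ge] show ?thesis by simp
qed

end
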